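(* Let $S\subseteq\Sigma^n$ be a double-MDS-code with canonical parameters $k$ and $\{K_1,\ldots,K_k\}$, $n_j=|K_j|$, and let $C\subseteq S$ be an $(n,2)_4$ MDS code. (a) If $2<k<n$, or if $k=2$ with $n_1>1$ and $n_2>1$, then $C$ is decomposable. (b) If $k=n$, then $C$ is semilinear.
   Context: Let $\Sigma=\{0,1,2,3\}$, $[n]=\{1,\ldots,n\}$. An $i$-line of $\Sigma^n$ is a set of the four words that agree in all coordinates except the $i$th; a line is an $i$-line for some $i$. An $(n,2)_4$ MDS code is a set $C\subseteq\Sigma^n$ meeting every line in exactly one element. A double-code is a set meeting every line in $0$ or $2$ elements; a double-MDS-code is a set meeting every line in exactly $2$ elements; a double-code is complementable if contained in a double-MDS-code, and prime if complementable, nonempty and not partitionable into two or more nonempty double-codes. An $n$-quasigroup is a map $g:\Sigma^n\to\Sigma$ such that, for each $i$ and each fixing of the other arguments, $x_i\mapsto g(\bar x)$ is a bijection of $\Sigma$. $\chi_S$ denotes the characteristic function, $\oplus$ addition mod 2, and for $K=\{i_1<\cdots<i_m\}\subseteq[n]$, $\bar x_K=(x_{i_1},\ldots,x_{i_m})$. A double-MDS-code $D\subseteq\Sigma^m$ is linear if $\chi_D(y_1,\ldots,y_m)=\chi_1(y_1)\oplus\cdots\oplus\chi_m(y_m)$ for some $\chi_i:\Sigma\to\{0,1\}$; an MDS code is semilinear if it is contained in some linear double-MDS-code. An $(n,2)_4$ MDS code $C$ is decomposable if there are $m\in\{2,\ldots,n-2\}$, an $m$-quasigroup $g'$, an $(n-m)$-quasigroup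 $g''$ and a permutation $\sigma$ of $[n]$ with $C=\{\bar x: g'(x_{\sigma(1)},\ldots,x_{\sigma(m)})=g''(x_{\sigma(m+1)},\ldots,x_{\sigma(n)})\}$. Canonical parameters: every double-MDS-code $S\subseteq\Sigma^n$ has a unique representation $\chi_S(\bar x)=\bigoplus_{j=1}^k\chi_{S_j}(\bar x_{K_j})\oplus\sigma_0$ with $k\in[n]$, $\{K_1,\ldots,K_k\}$ a partition of $[n]$ into nonempty sets, $S_j\subseteq\Sigma^{|K_j|}$ prime double-MDS-codes containing $\bar 0$, and $\sigma_0\in\{0,1\}$; $k$ and $\{K_j\}$ are the canonical parameters of $S$. *)

theory Defs
  imports Main
begin

(* Words of Sigma^n, Sigma = {0,1,2,3}, represented as nat lists of length n;
   coordinate i in [n] of the paper corresponds to list index i-1. *)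
definition words :: "nat \<Rightarrow> nat list set" where
  "words n = {xs. length xs = n \<and> (\<forall>a\<in>set xs. a < 4)}"

definition line :: "nat list \<Rightarrow> nat \<Rightarrow> nat list set" where
  "line x i = {x[i := a] | a. a < (4::nat)}"

definition is_line :: "nat \<Rightarrow> nat list set \<Rightarrow> bool" where
  "is_line n L \<longleftrightarrow> (\<exists>x\<in>words n. \<exists>i<n. L = line x i)"

definition mds_code :: "nat \<Rightarrow> nat list set \<Rightarrow> bool" where
  "mds_code n C \<longleftrightarrow> C \<subseteq> words n \<and> (\<forall>L. is_line n L \<longrightarrow> card (C \<inter> L) = 1)"

definition double_code :: "nat \<Rightarrow> nat list set \<Rightarrow> bool" where
  "double_code n S \<longleftrightarrow> S \<subseteq> words n \<and>
     (\<forall>L. is_line n L \<longrightarrow> card (S \<inter> L) = 0 \<or> card (S \<inter> L) = 2)"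

definition double_mds :: "nat \<Rightarrow> nat list set \<Rightarrow> bool" where
  "double_mds n S \<longleftrightarrow> S \<subseteq> words n \<and> (\<forall>L. is_line n L \<longrightarrow> card (S \<inter> L) = 2)"

definition complementable :: "nat \<Rightarrow> nat list set \<Rightarrow> bool" where
  "complementable n S \<longleftrightarrow> double_code n S \<and> (\<exists>D. double_mds n D \<and> S \<subseteq> D)"

definition prime_dc :: "nat \<Rightarrow> nat list set \<Rightarrow> bool" where
  "prime_dc n S \<longleftrightarrow> complementable n S \<and> S \<noteq> {} \<and>
     \<not> (\<exists>P. finite P \<and> card P \<ge> 2 \<and> \<Union>P = S \<and>
          (\<forall>A\<in>P. A \<noteq> {} \<and> double_code n A) \<and>
          (\<forall>A\<in>P. \<forall>B\<in>P. A \<noteq> B \<longrightarrow> A \<inter> B = {}))"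

definition quasigroup :: "nat \<Rightarrow> (nat list \<Rightarrow> nat) \<Rightarrow> bool" where
  "quasigroup m g \<longleftrightarrow> (\<forall>x\<in>words m. g x < 4) \<and>
     (\<forall>x\<in>words m. \<forall>i<m. bij_betw (\<lambda>a. g (x[i := a])) {..<4} {..<4})"

definition restrict_word :: "nat list \<Rightarrow> nat set \<Rightarrow> nat list" where
  "restrict_word x K = map (\<lambda>i. x ! i) (sorted_list_of_set K)"

(* chi_S(x) = chi_{S_1}(x_{K_1}) xor ... xor chi_{S_k}(x_{K_k}) xor sigma0,
   with {K_j} a partition of the coordinate set into nonempty sets and
   S_j prime double-MDS-codes containing the zero word *)
definition canonical_rep ::
  "nat \<Rightarrow> nat list set \<Rightarrow> nat \<Rightarrow> nat set list \<Rightarrow> nat list set list \<Rightarrow> bool \<Rightarrow> bool" where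
  "canonical_rep n S k Ks Ss s0 \<longleftrightarrow>
     1 \<le> k \<and> k \<le> n \<and> length Ks = k \<and> length Ss = k \<and>
     (\<forall>j<k. Ks ! j \<noteq> {}) \<and>
     (\<forall>j<k. \<forall>j'<k. j \<noteq> j' \<longrightarrow> Ks ! j \<inter> Ks ! j' = {}) \<and>
     (\<Union>j<k. Ks ! j) = {..<n} \<and>
     (\<forall>j<k. double_mds (card (Ks ! j)) (Ss ! j) \<and> prime_dc (card (Ks ! j)) (Ss ! j)
            \<and> replicate (card (Ks ! j)) 0 \<in> Ss ! j) \<and>
     (\<forall>x\<in>words n. (x \<in> S) \<longleftrightarrow>
        (odd (card {j. j < k \<and> restrict_word x (Ks ! j) \<in> Ss ! j}) \<noteq> s0))"

definition canonical_params :: "nat \<Rightarrow> nat list set \<Rightarrow> nat \<Rightarrow> nat set list \<Rightarrow> bool" where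
  "canonical_params n S k Ks \<longleftrightarrow> (\<exists>Ss s0. canonical_rep n S k Ks Ss s0)"

definition decomposable :: "nat \<Rightarrow> nat list set \<Rightarrow> bool" where
  "decomposable n C \<longleftrightarrow> (\<exists>m g1 g2 \<sigma>. 2 \<le> m \<and> m \<le> n - 2 \<and>
      quasigroup m g1 \<and> quasigroup (n - m) g2 \<and> bij_betw \<sigma> {..<n} {..<n} \<and>
      C = {x \<in> words n. g1 (map (\<lambda>i. x ! \<sigma> i) [0..<m]) = g2 (map (\<lambda>i. x ! \<sigma> i) [m..<n])})"

definition linear_double_mds :: "nat \<Rightarrow> nat list set \<Rightarrow> bool" where
  "linear_double_mds m D \<longleftrightarrow> double_mds m D \<and>
     (\<exists>\<chi> :: nat \<Rightarrow> nat \<Rightarrow> bool. \<forall>y\<in>words m.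
        (y \<in> D) \<longleftrightarrow> odd (card {i. i < m \<and> \<chi> i (y ! i)}))"

definition semilinear :: "nat \<Rightarrow> nat list set \<Rightarrow> bool" where
  "semilinear n C \<longleftrightarrow> mds_code n C \<and> (\<exists>D. linear_double_mds n D \<and> C \<subseteq> D)"

end

theory Submission
  imports Defs
begin

text \<open>
  Pick a block \<open>K\<close> of the canonical representation with \<open>2 \<le> |K| \<le> n - 2\<close> and let \<open>A\<close>
  be the prime component on it. Since \<open>C \<subseteq> S\<close>, two codewords agreeing outside \<open>K\<close> have the same
  parity count on the other blocks, hence their restrictions to \<open>K\<close> lie both in \<open>A\<close> or both
  outside. Move \<open>K\<close> to the front and let \<open>slice u\<close> be the MDS code of tails \<open>v\<close> with
  \<open>u @ v \<in> C\<close>. Two words on a common line of \<open>A\<close> (or of its complement) have complementary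
  slices within the union of all slices of \<open>A\<close> (resp. of its complement), and a prime double-MDS code as well as its complement is connected by lines, so the
  slices take only two values on \<open>A\<close> and two on its complement. Numbering these four cases
  \<open>0..3\<close> defines two quasigroups that decompose \<open>C\<close>.

  If all blocks are singletons, the characteristic function of \<open>S\<close> is a sum of
  coordinate functions, so \<open>S\<close> is a linear double-MDS code containing \<open>C\<close>.
\<close>

section \<open>Words, lines and quasigroups\<close>

lemma length_words: "x \<in> words n \<Longrightarrow> length x = n"
  by (simp add: words_def)

lemma nth_words_less: "x \<in> words n \<Longrightarrow> i < n \<Longrightarrow> x ! i < 4"
  by (simp add: words_def)

lemma list_update_words: "x \<in> words n \<Longrightarrow> a < 4 \<Longrightarrow> x[i := a] \<in> words n"
  unfolding words_def by (auto dest: set_update_subset_insert[THEN subsetD])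

lemma append_words: "u \<in> words m \<Longrightarrow> v \<in> words l \<Longrightarrow> u @ v \<in> words (m + l)"
  by (auto simp: words_def)

lemma take_words: "y \<in> words n \<Longrightarrow> m \<le> n \<Longrightarrow> take m y \<in> words m"
  by (auto simp: words_def dest: in_set_takeD)

lemma drop_words: "y \<in> words n \<Longrightarrow> drop m y \<in> words (n - m)"
  by (auto simp: words_def dest: in_set_dropD)

lemma replicate_zero_words: "replicate m 0 \<in> words m"
  by (simp add: words_def)

definition line_hits :: "nat list set \<Rightarrow> nat list \<Rightarrow> nat \<Rightarrow> nat set" where
  "line_hits T x i = {a. a < 4 \<and> x[i := a] \<in> T}"

lemma line_hits_subset: "line_hits T x i \<subseteq> {..<4}"
  by (auto simp: line_hits_def)

lemma finite_line_hits [simp]: "finite (line_hits T x i)"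
  using finite_subset[OF line_hits_subset] by simp

lemma card_Int_line:
  assumes "i < length x"
  shows "card (T \<inter> line x i) = card (line_hits T x i)"
proof -
  have "T \<inter> line x i = (\<lambda>a. x[i := a]) ` line_hits T x i"
    unfolding line_def line_hits_def by blast
  moreover have "inj_on (\<lambda>a. x[i := a]) (line_hits T x i)"
    by (rule inj_onI) (metis assms nth_list_update_eq)
  ultimately show ?thesis
    by (simp add: card_image)
qed

lemma is_line_line: "x \<in> words n \<Longrightarrow> i < n \<Longrightarrow> is_line n (line x i)"
  unfolding is_line_def by blast

lemma mds_code_card_line_hits:
  "mds_code n C \<Longrightarrow> x \<in> words n \<Longrightarrow> i < n \<Longrightarrow> card (line_hits C x i) = 1"
  unfolding mds_code_def by (metis card_Int_line is_line_line length_words)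

lemma double_mds_card_line_hits:
  "double_mds n D \<Longrightarrow> x \<in> words n \<Longrightarrow> i < n \<Longrightarrow> card (line_hits D x i) = 2"
  unfolding double_mds_def by (metis card_Int_line is_line_line length_words)

lemma double_mds_subset: "double_mds n D \<Longrightarrow> D \<subseteq> words n"
  by (simp add: double_mds_def)

lemma mds_code_subset: "mds_code n C \<Longrightarrow> C \<subseteq> words n"
  by (simp add: mds_code_def)

lemma mds_codeI:
  assumes "C \<subseteq> words n" and "\<And>x i. x \<in> words n \<Longrightarrow> i < n \<Longrightarrow> card (line_hits C x i) = 1"
  shows "mds_code n C"
  unfolding mds_code_def is_line_def using assms by (auto simp: card_Int_line length_words)

lemma double_codeI:
  assumes "D \<subseteq> words n"
    and "\<And>x i. x \<in> words n \<Longrightarrow> i < n \<Longrightarrow> card (line_hits D x i) = 0 \<or> card (line_hits D x i) = 2"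
  shows "double_code n D"
  unfolding double_code_def is_line_def using assms by (metis card_Int_line length_words)

lemma mds_code_ex1_on_line:
  assumes "mds_code n C" "x \<in> words n" "i < n"
  shows "\<exists>!a. a < 4 \<and> x[i := a] \<in> C"
proof -
  obtain c where "line_hits C x i = {c}"
    using mds_code_card_line_hits[OF assms] by (auto simp: card_Suc_eq)
  then show ?thesis
    unfolding line_hits_def by (metis (mono_tags, lifting) mem_Collect_eq singletonD singletonI)
qed

lemma card_2_third_eq:
  "card S = 2 \<Longrightarrow> a \<in> S \<Longrightarrow> b \<in> S \<Longrightarrow> c \<in> S \<Longrightarrow> a \<noteq> b \<Longrightarrow> c = a \<or> c = b"
  by (auto simp: card_2_iff)

lemma quasigroupI:
  assumes range: "\<And>x. x \<in> words m \<Longrightarrow> g x < 4"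
    and inj: "\<And>x i a b. x \<in> words m \<Longrightarrow> i < m \<Longrightarrow> a < 4 \<Longrightarrow> b < 4 \<Longrightarrow>
                g (x[i := a]) = g (x[i := b]) \<Longrightarrow> a = b"
  shows "quasigroup m g"
  unfolding quasigroup_def
proof (intro conjI ballI allI impI)
  fix x i assume x: "x \<in> words m" and i: "i < m"
  let ?f = "\<lambda>a. g (x[i := a])"
  have "inj_on ?f {..<4}"
    using inj[OF x i] by (auto intro: inj_onI)
  moreover have "?f ` {..<4} \<subseteq> {..<4}"
    using range list_update_words[OF x] by auto
  ultimately show "bij_betw ?f {..<4} {..<4}"
    by (simp add: bij_betw_def endo_inj_surj)
qed (rule range)

lemma quasigroup_surj:
  assumes g: "quasigroup m g" and m: "0 < m" and t: "t < 4"
  shows "\<exists>x\<in>words m. g x = t"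
proof -
  have "bij_betw (\<lambda>a. g ((replicate m 0)[0 := a])) {..<4} {..<4}"
    using g m replicate_zero_words unfolding quasigroup_def by blast
  then have "t \<in> (\<lambda>a. g ((replicate m 0)[0 := a])) ` {..<4}"
    using t by (simp add: bij_betw_imp_surj_on)
  then obtain a where "a < 4" "g ((replicate m 0)[0 := a]) = t"
    by auto
  then show ?thesis
    using list_update_words[OF replicate_zero_words] by blast
qed

lemma ex_line_hit_if_card_2:
  assumes "card (line_hits Q x i) = 2"
  shows "\<exists>a<4. x[i := a] \<in> Q"
proof -
  have "line_hits Q x i \<noteq> {}"
    using assms by auto
  then show ?thesis
    unfolding line_hits_def by blast
qed

lemma nonempty_if_card_line_hits_2:
  assumes "\<And>x i. x \<in> words m \<Longrightarrow> i < m \<Longrightarrow> card (line_hits Q x i) = 2" and "0 < m"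
  shows "Q \<noteq> {}"
  using ex_line_hit_if_card_2[OF assms(1)[OF replicate_zero_words assms(2)]] by blast

section \<open>Line connectivity of double-MDS codes\<close>

definition line_adj :: "nat \<Rightarrow> nat list set \<Rightarrow> (nat list \<times> nat list) set" where
  "line_adj m Q = {(u, u[i := b]) | u i b. u \<in> Q \<and> i < m \<and> b < 4 \<and> u[i := b] \<in> Q}"

definition line_connected :: "nat \<Rightarrow> nat list set \<Rightarrow> bool" where
  "line_connected m Q \<longleftrightarrow> (\<forall>u\<in>Q. \<forall>w\<in>Q. (u, w) \<in> (line_adj m Q)\<^sup>*)"

lemma line_adjI: "u \<in> Q \<Longrightarrow> i < m \<Longrightarrow> b < 4 \<Longrightarrow> u[i := b] \<in> Q \<Longrightarrow> (u, u[i := b]) \<in> line_adj m Q"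
  unfolding line_adj_def by blast

lemma line_adjE:
  assumes "(u, w) \<in> line_adj m Q"
  obtains i b where "u \<in> Q" "i < m" "b < 4" "w = u[i := b]" "w \<in> Q"
  using assms unfolding line_adj_def by blast

lemma line_adj_rtrancl_closed: "(u0, u) \<in> (line_adj m Q)\<^sup>* \<Longrightarrow> u0 \<in> Q \<Longrightarrow> u \<in> Q"
  by (induction rule: rtrancl_induct) (auto elim: line_adjE)

lemma component_line_closed:
  assumes "w \<in> {w. (u0, w) \<in> (line_adj m Q)\<^sup>*}" "u0 \<in> Q" "i < m" "b < 4" "w[i := b] \<in> Q"
  shows "w[i := b] \<in> {w. (u0, w) \<in> (line_adj m Q)\<^sup>*}"
proof -
  have "w \<in> Q"
    using assms(1,2) line_adj_rtrancl_closed by blast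
  then show ?thesis
    using assms by (auto intro: rtrancl_into_rtrancl line_adjI)
qed

lemma line_closed_double_code:
  assumes D: "double_mds m D" and "X \<subseteq> D"
    and closed: "\<And>w i b. w \<in> X \<Longrightarrow> i < m \<Longrightarrow> b < 4 \<Longrightarrow> w[i := b] \<in> D \<Longrightarrow> w[i := b] \<in> X"
  shows "double_code m X"
proof (rule double_codeI)
  show "X \<subseteq> words m"
    using assms(2) double_mds_subset[OF D] by blast
next
  fix x i assume x: "x \<in> words m" and i: "i < m"
  show "card (line_hits X x i) = 0 \<or> card (line_hits X x i) = 2"
  proof (cases "line_hits X x i = {}")
    case False
    then obtain a0 where a0: "x[i := a0] \<in> X"
      by (auto simp: line_hits_def)
    have "line_hits X x i = line_hits D x i"
      using assms(2) closed[OF a0 i] by (auto simp: line_hits_def)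
    then show ?thesis
      using double_mds_card_line_hits[OF D x i] by simp
  qed simp
qed

lemma prime_dc_not_split:
  assumes "prime_dc m D" and "X \<union> Y = D" "X \<inter> Y = {}" and "X \<noteq> {}" "Y \<noteq> {}"
    and "double_code m X" "double_code m Y"
  shows False
proof -
  have "X \<noteq> Y"
    using assms(3,4) by blast
  have "\<exists>P. finite P \<and> card P \<ge> 2 \<and> \<Union>P = D \<and> (\<forall>A\<in>P. A \<noteq> {} \<and> double_code m A) \<and>
      (\<forall>A\<in>P. \<forall>B\<in>P. A \<noteq> B \<longrightarrow> A \<inter> B = {})"
  proof (intro exI[of _ "{X, Y}"] conjI)
    show "card {X, Y} \<ge> 2"
      using \<open>X \<noteq> Y\<close> by simp
  qed (use assms in auto)
  then show False
    using assms(1) unfolding prime_dc_def by (elim conjE) contradiction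
qed

lemma prime_dc_line_connected:
  assumes D: "double_mds m D" and prime: "prime_dc m D"
  shows "line_connected m D"
  unfolding line_connected_def
proof (intro ballI, rule ccontr)
  fix u0 u assume u0: "u0 \<in> D" and u: "u \<in> D" and not_reached: "(u0, u) \<notin> (line_adj m D)\<^sup>*"
  define X where "X = {w. (u0, w) \<in> (line_adj m D)\<^sup>*}"
  define Y where "Y = D - X"
  have X_sub: "X \<subseteq> D"
    unfolding X_def using line_adj_rtrancl_closed u0 by blast
  have X_closed: "w[i := b] \<in> X" if "w \<in> X" "i < m" "b < 4" "w[i := b] \<in> D" for w i b
    using component_line_closed[OF _ u0] that unfolding X_def by blast
  have Y_closed: "w[i := b] \<in> Y" if w: "w \<in> Y" "i < m" "b < 4" "w[i := b] \<in> D" for w i b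
  proof -
    have w_words: "w \<in> words m"
      using w(1) double_mds_subset[OF D] unfolding Y_def by blast
    have "(w[i := b])[i := w ! i] = w"
      by simp
    then have "w[i := b] \<notin> X"
      using X_closed[of "w[i := b]" i "w ! i"] w nth_words_less[OF w_words] unfolding Y_def by force
    then show ?thesis
      using w(4) unfolding Y_def by blast
  qed
  have "double_code m X" "double_code m Y"
    using line_closed_double_code[OF D] X_sub X_closed Y_closed unfolding Y_def by blast+
  moreover have "u0 \<in> X" "u \<in> Y"
    using u not_reached unfolding X_def Y_def by auto
  moreover have "X \<union> Y = D" "X \<inter> Y = {}"
    using X_sub unfolding Y_def by auto
  ultimately show False
    using prime_dc_not_split[OF prime] by blast
qed

lemma card_line_hits_complement:
  assumes D: "double_mds m D" and x: "x \<in> words m" and i: "i < m"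
  shows "card (line_hits (words m - D) x i) = 2"
proof -
  have "line_hits (words m - D) x i = {..<4} - line_hits D x i"
    unfolding line_hits_def using list_update_words[OF x] by auto
  then show ?thesis
    using double_mds_card_line_hits[OF D x i] line_hits_subset by (simp add: card_Diff_subset)
qed

text \<open>Both sets of hits are 2-element subsets of the three values other than \<open>a ! 0\<close>.\<close>

lemma complement_common_hit:
  assumes D: "double_mds m D" and a: "a \<in> D" "a[i := c] \<in> D" and i: "0 < i" "i < m"
  shows "\<exists>b. a[0 := b] \<in> words m - D \<and> (a[i := c])[0 := b] \<in> words m - D"
proof -
  have a_words: "a \<in> words m" "a[i := c] \<in> words m"
    using a double_mds_subset[OF D] by auto
  define N1 where "N1 = line_hits (words m - D) a 0"
  define N2 where "N2 = line_hits (words m - D) (a[i := c]) 0"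
  have "card N1 = 2" "card N2 = 2"
    unfolding N1_def N2_def using card_line_hits_complement[OF D] a_words i by auto
  have "(a[i := c])[0 := a ! 0] = a[i := c]"
    using i list_update_id[of "a[i := c]" 0] by simp
  then have "a ! 0 \<notin> N1" "a ! 0 \<notin> N2"
    using a unfolding N1_def N2_def line_hits_def by simp_all
  then have "N1 \<union> N2 \<subseteq> {..<4} - {a ! 0}"
    using line_hits_subset unfolding N1_def N2_def by blast
  moreover have "card ({..<4} - {a ! 0}) = 3"
    using nth_words_less[OF a_words(1)] i by simp
  ultimately have "card (N1 \<union> N2) \<le> 3"
    by (metis card_mono finite_Diff finite_lessThan)
  moreover have "card N1 + card N2 = card (N1 \<union> N2) + card (N1 \<inter> N2)"
    unfolding N1_def N2_def by (rule card_Un_Int) simp_all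
  ultimately have "card (N1 \<inter> N2) \<noteq> 0"
    using \<open>card N1 = 2\<close> \<open>card N2 = 2\<close> by linarith
  then obtain b where "b \<in> N1" "b \<in> N2"
    by (metis card.empty disjoint_iff)
  then show ?thesis
    unfolding N1_def N2_def line_hits_def by blast
qed

text \<open>Call a word \<open>a\<close> of \<open>D\<close> linked to a line-closed subset \<open>X\<close> of the complement of \<open>D\<close> if
  \<open>X\<close> meets the 0-line through \<open>a\<close>. Links propagate along lines inside \<open>D\<close>.\<close>

lemma complement_link_step:
  assumes D: "double_mds m D" and m: "0 < m"
    and closed: "\<And>w i b. w \<in> X \<Longrightarrow> i < m \<Longrightarrow> b < 4 \<Longrightarrow> w[i := b] \<in> words m - D \<Longrightarrow> w[i := b] \<in> X"
    and a: "a \<in> D" "a[i := c] \<in> D" and i: "i < m" and link: "\<exists>b<4. a[0 := b] \<in> X"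
  shows "\<exists>b<4. (a[i := c])[0 := b] \<in> X"
proof (cases "i = 0")
  case False
  obtain b where b: "a[0 := b] \<in> words m - D" "(a[i := c])[0 := b] \<in> words m - D"
    using complement_common_hit[OF D a] False i by blast
  have "length a = m"
    using a(1) double_mds_subset[OF D] length_words by blast
  then have b4: "b < 4"
    using b(1) m nth_words_less[of "a[0 := b]" m 0] by simp
  obtain b0 where "b0 < 4" "a[0 := b0] \<in> X"
    using link by blast
  then have "a[0 := b] \<in> X"
    using closed[of "a[0 := b0]" 0 b] b(1) b4 m by simp
  moreover have "(a[0 := b])[i := c] = (a[i := c])[0 := b]"
    using False by (simp add: list_update_swap)
  moreover have "c < 4"
    using a(2) i double_mds_subset[OF D] nth_words_less[of "a[i := c]" m i] \<open>length a = m\<close>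
    by auto
  ultimately have "(a[i := c])[0 := b] \<in> X"
    using closed[of "a[0 := b]" i c] b(2) i by simp
  then show ?thesis
    using b4 by blast
qed (use link in simp)

lemma complement_line_connected:
  assumes D: "double_mds m D" and conn: "line_connected m D" and m: "0 < m"
  shows "line_connected m (words m - D)"
  unfolding line_connected_def
proof (intro ballI)
  fix y0 y assume y0: "y0 \<in> words m - D" and y: "y \<in> words m - D"
  define X where "X = {w. (y0, w) \<in> (line_adj m (words m - D))\<^sup>*}"
  have X_closed: "w[i := b] \<in> X" if "w \<in> X" "i < m" "b < 4" "w[i := b] \<in> words m - D" for w i b
    using component_line_closed[OF _ y0] that unfolding X_def by blast
  have link_path: "\<exists>b<4. a[0 := b] \<in> X"
    if "(a0, a) \<in> (line_adj m D)\<^sup>*" "\<exists>b<4. a0[0 := b] \<in> X" for a0 a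
    using that
    by (induction rule: rtrancl_induct) (auto elim: line_adjE intro: complement_link_step[OF D m X_closed])
  obtain c where c: "y0[0 := c] \<in> D"
    using ex_line_hit_if_card_2[OF double_mds_card_line_hits[OF D _ m]] y0 by blast
  have "(y0[0 := c])[0 := y0 ! 0] \<in> X"
    unfolding X_def by simp
  then have "\<exists>b<4. (y0[0 := c])[0 := b] \<in> X"
    using nth_words_less[of y0 m 0] y0 m by blast
  moreover obtain c' where c': "y[0 := c'] \<in> D"
    using ex_line_hit_if_card_2[OF double_mds_card_line_hits[OF D _ m]] y by blast
  ultimately obtain b where "b < 4" "(y[0 := c'])[0 := b] \<in> X"
    using link_path conn c unfolding line_connected_def by blast
  then have "(y[0 := b])[0 := y ! 0] \<in> X"
    using X_closed[of "y[0 := b]" 0 "y ! 0"] y m nth_words_less[of y m 0] by simp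
  then show "(y0, y) \<in> (line_adj m (words m - D))\<^sup>*"
    unfolding X_def by simp
qed

section \<open>Splitting an MDS code into a head and a tail\<close>

locale mds_split =
  fixes n m :: nat and C :: "nat list set"
  assumes mds: "mds_code n C" and m_pos: "0 < m" and m_less: "m < n"
begin

definition slice :: "nat list \<Rightarrow> nat list set" where
  "slice u = {v \<in> words (n - m). u @ v \<in> C}"

lemma slice_words: "slice u \<subseteq> words (n - m)"
  by (auto simp: slice_def)

lemma append_words_split: "u \<in> words m \<Longrightarrow> v \<in> words (n - m) \<Longrightarrow> u @ v \<in> words n"
  using append_words[of u m v "n - m"] m_less by simp

lemma mds_code_slice:
  assumes u: "u \<in> words m"
  shows "mds_code (n - m) (slice u)"
proof (rule mds_codeI[OF slice_words])
  fix v i assume v: "v \<in> words (n - m)" and i: "i < n - m"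
  have "line_hits (slice u) v i = line_hits C (u @ v) (m + i)"
    using list_update_words[OF v] length_words[OF u]
    by (auto simp: line_hits_def slice_def list_update_append)
  then show "card (line_hits (slice u) v i) = 1"
    using mds_code_card_line_hits[OF mds append_words_split[OF u v]] i by simp
qed

lemma slice_nonempty:
  assumes "u \<in> words m"
  shows "slice u \<noteq> {}"
proof -
  have "\<exists>!a. a < 4 \<and> (replicate (n - m) 0)[0 := a] \<in> slice u"
    using mds_code_ex1_on_line[OF mds_code_slice[OF assms] replicate_zero_words] m_less by simp
  then show ?thesis
    by blast
qed

lemma ex1_slice_on_line:
  assumes u: "u \<in> words m" and v: "v \<in> words (n - m)" and i: "i < m"
  shows "\<exists>!a. a < 4 \<and> v \<in> slice (u[i := a])"
proof -
  have "(u @ v)[i := a] = u[i := a] @ v" for a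
    using length_words[OF u] i by (simp add: list_update_append)
  then show ?thesis
    using mds_code_ex1_on_line[OF mds append_words_split[OF u v], of i] i m_less v
    by (simp add: slice_def)
qed

lemma slice_on_line_unique:
  assumes "u \<in> words m" "i < m" "a < 4" "b < 4" "v \<in> slice (u[i := a])" "v \<in> slice (u[i := b])"
  shows "a = b"
  using ex1_slice_on_line[OF assms(1) _ assms(2)] slice_words assms(3-6) by blast

lemma code_eq_if_slice_iff:
  assumes iff: "\<And>u v. u \<in> words m \<Longrightarrow> v \<in> words (n - m) \<Longrightarrow> v \<in> slice u \<longleftrightarrow> g1 u = g2 v"
  shows "C = {y \<in> words n. g1 (take m y) = g2 (drop m y)}"
proof (intro set_eqI)
  fix y
  show "y \<in> C \<longleftrightarrow> y \<in> {y \<in> words n. g1 (take m y) = g2 (drop m y)}"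
  proof (cases "y \<in> words n")
    case True
    then have "y \<in> C \<longleftrightarrow> drop m y \<in> slice (take m y)"
      by (simp add: slice_def drop_words)
    then show ?thesis
      using iff[OF take_words drop_words] True m_less by simp
  next
    case False
    then show ?thesis
      using mds_code_subset[OF mds] by auto
  qed
qed

lemma quasigroups_if_slice_iff:
  assumes iff: "\<And>u v. u \<in> words m \<Longrightarrow> v \<in> words (n - m) \<Longrightarrow> v \<in> slice u \<longleftrightarrow> g1 u = g2 v"
    and g2: "\<And>v. g2 v < 4"
  shows "quasigroup m g1 \<and> quasigroup (n - m) g2"
proof
  have g1: "g1 u < 4" if u: "u \<in> words m" for u
  proof -
    obtain v where "v \<in> slice u"
      using slice_nonempty[OF u] by blast
    then have "g1 u = g2 v"
      using iff[OF u] slice_words by blast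
    then show ?thesis
      using g2 by simp
  qed
  show q1: "quasigroup m g1"
  proof (rule quasigroupI[OF g1])
    fix u i a b
    assume u: "u \<in> words m" and i: "i < m" and ab: "a < 4" "b < 4" and eq: "g1 (u[i := a]) = g1 (u[i := b])"
    obtain v where v: "v \<in> slice (u[i := a])"
      using slice_nonempty[OF list_update_words[OF u ab(1)]] by blast
    then have v_words: "v \<in> words (n - m)"
      using slice_words by blast
    have "v \<in> slice (u[i := b])"
      using iff[OF list_update_words[OF u ab(1)] v_words] iff[OF list_update_words[OF u ab(2)] v_words] v eq
      by simp
    then show "a = b"
      using slice_on_line_unique[OF u i ab] v by blast
  qed
  show "quasigroup (n - m) g2"
  proof (rule quasigroupI[OF g2])
    fix v i a b
    assume v: "v \<in> words (n - m)" and i: "i < n - m" and ab: "a < 4" "b < 4"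
      and eq: "g2 (v[i := a]) = g2 (v[i := b])"
    obtain u where u: "u \<in> words m" "g1 u = g2 (v[i := a])"
      using quasigroup_surj[OF q1 m_pos g2] by blast
    then have "v[i := a] \<in> slice u" "v[i := b] \<in> slice u"
      using iff[OF u(1)] list_update_words[OF v] ab eq by simp_all
    then show "a = b"
      using mds_code_ex1_on_line[OF mds_code_slice[OF u(1)] v i] ab by blast
  qed
qed

lemma split_if_slices_are_level_sets:
  assumes g2: "\<And>v. g2 v < 4"
    and levels: "\<And>u. u \<in> words m \<Longrightarrow> \<exists>c. slice u = {v \<in> words (n - m). g2 v = c}"
  shows "\<exists>g1. quasigroup m g1 \<and> quasigroup (n - m) g2 \<and> C = {y \<in> words n. g1 (take m y) = g2 (drop m y)}"
proof -
  define g1 where "g1 u = (SOME c. slice u = {v \<in> words (n - m). g2 v = c})" for u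
  have iff: "v \<in> slice u \<longleftrightarrow> g1 u = g2 v" if "u \<in> words m" "v \<in> words (n - m)" for u v
  proof -
    have "slice u = {v \<in> words (n - m). g2 v = g1 u}"
      unfolding g1_def by (rule someI_ex[OF levels[OF that(1)]])
    then show ?thesis
      using that(2) by (simp add: eq_commute[of "g1 u"])
  qed
  show ?thesis
    using quasigroups_if_slice_iff[OF iff g2] code_eq_if_slice_iff[OF iff] by blast
qed

text \<open>Every column \<open>{u[i := a] @ v | a}\<close> meets \<open>C\<close> exactly once, and the \<open>i\<close>-line of \<open>Q\<close> through
  \<open>u\<close> consists of \<open>u\<close> and \<open>u[i := b]\<close> only, so the slices of these two words partition \<open>W\<close>.\<close>

lemma slice_flip:
  assumes Q: "\<And>x i. x \<in> words m \<Longrightarrow> i < m \<Longrightarrow> card (line_hits Q x i) = 2" "Q \<subseteq> words m"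
    and W: "W \<subseteq> words (n - m)"
    and compat: "\<And>u v. u \<in> words m \<Longrightarrow> v \<in> slice u \<Longrightarrow> u \<in> Q \<longleftrightarrow> v \<in> W"
    and u: "u \<in> Q" "u[i := b] \<in> Q" "i < m" "b < 4" "b \<noteq> u ! i"
  shows "slice (u[i := b]) = W - slice u"
proof (intro set_eqI iffI)
  have u_words: "u \<in> words m"
    using u(1) Q(2) by blast
  then have ui: "u ! i < 4" "u[i := u ! i] = u"
    using nth_words_less u(3) by simp_all
  fix v
  {
    assume v: "v \<in> slice (u[i := b])"
    have "v \<in> W"
      using compat[OF list_update_words[OF u_words u(4)] v] u(2) by simp
    moreover have "v \<notin> slice u"
      using slice_on_line_unique[OF u_words u(3) ui(1) u(4) _ v] ui(2) u(5) by auto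
    ultimately show "v \<in> W - slice u"
      by simp
  next
    assume v: "v \<in> W - slice u"
    then have v_words: "v \<in> words (n - m)"
      using W by blast
    obtain a where a: "a < 4" "v \<in> slice (u[i := a])"
      using ex1_slice_on_line[OF u_words v_words u(3)] by blast
    then have "u[i := a] \<in> Q"
      using compat[OF list_update_words[OF u_words a(1)]] v by blast
    moreover have "a \<noteq> u ! i"
    proof
      assume "a = u ! i"
      then have "v \<in> slice u"
        using a(2) ui(2) by simp
      then show False
        using v by simp
    qed
    ultimately have "a = b"
      using card_2_third_eq[OF Q(1)[OF u_words u(3)], of "u ! i" b a] u ui a(1)
      unfolding line_hits_def by simp
    then show "v \<in> slice (u[i := b])"
      using a(2) by simp
  }
qed

lemma slice_two_valued:
  assumes Q: "\<And>x i. x \<in> words m \<Longrightarrow> i < m \<Longrightarrow> card (line_hits Q x i) = 2" "Q \<subseteq> words m"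
    and W: "W \<subseteq> words (n - m)"
    and compat: "\<And>u v. u \<in> words m \<Longrightarrow> v \<in> slice u \<Longrightarrow> u \<in> Q \<longleftrightarrow> v \<in> W"
    and conn: "line_connected m Q"
  obtains P where "P \<subseteq> W" "\<And>u. u \<in> Q \<Longrightarrow> slice u = P \<or> slice u = W - P"
proof -
  obtain u0 where u0: "u0 \<in> Q"
    using nonempty_if_card_line_hits_2[OF Q(1) m_pos] by blast
  have P: "slice u0 \<subseteq> W"
    using compat u0 Q(2) by blast
  have "slice u = slice u0 \<or> slice u = W - slice u0" if "(u0, u) \<in> (line_adj m Q)\<^sup>*" for u
    using that
  proof (induction rule: rtrancl_induct)
    case (step u u')
    from step.hyps(2) obtain i b where ib: "u \<in> Q" "i < m" "b < 4" "u' = u[i := b]" "u' \<in> Q"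
      by (rule line_adjE)
    show ?case
    proof (cases "b = u ! i")
      case False
      then have "slice u' = W - slice u"
        using slice_flip[OF Q W compat ib(1) _ ib(2,3)] ib(4,5) by simp
      moreover have "W - (W - slice u0) = slice u0"
        using P by blast
      ultimately show ?thesis
        using step.IH by metis
    qed (use ib step.IH in simp)
  qed simp
  then show thesis
    using that[OF P] conn u0 unfolding line_connected_def by blast
qed

end

locale mds_block_split = mds_split +
  fixes A :: "nat list set"
  assumes double: "double_mds m A" and prime: "prime_dc m A"
    and compatible: "\<And>y y'. y \<in> C \<Longrightarrow> y' \<in> C \<Longrightarrow> drop m y = drop m y' \<Longrightarrow>
                       take m y \<in> A \<longleftrightarrow> take m y' \<in> A"
begin

definition A_tails :: "nat list set" where
  "A_tails = (\<Union>u\<in>A. slice u)"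

lemma A_tails_words: "A_tails \<subseteq> words (n - m)"
  unfolding A_tails_def using slice_words by blast

lemma slice_compatible:
  assumes "u \<in> words m" "v \<in> slice u" "u' \<in> words m" "v \<in> slice u'"
  shows "u \<in> A \<longleftrightarrow> u' \<in> A"
  using compatible[of "u @ v" "u' @ v"] assms length_words by (simp add: slice_def)

lemma A_tails_iff:
  assumes u: "u \<in> words m" and v: "v \<in> slice u"
  shows "u \<in> A \<longleftrightarrow> v \<in> A_tails"
proof
  assume "v \<in> A_tails"
  then obtain u' where "u' \<in> A" "v \<in> slice u'"
    unfolding A_tails_def by blast
  then show "u \<in> A"
    using slice_compatible[OF u v] double_mds_subset[OF double] by blast
qed (use v in \<open>auto simp: A_tails_def\<close>)

lemma complement_A_tails_iff:
  "u \<in> words m \<Longrightarrow> v \<in> slice u \<Longrightarrow> u \<in> words m - A \<longleftrightarrow> v \<in> words (n - m) - A_tails"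
  using A_tails_iff slice_words by blast

lemma slices_are_level_sets:
  obtains g2 :: "nat list \<Rightarrow> nat" where "\<And>v. g2 v < 4"
    and "\<And>u. u \<in> words m \<Longrightarrow> \<exists>c. slice u = {v \<in> words (n - m). g2 v = c}"
proof -
  obtain P where P: "P \<subseteq> A_tails" "\<And>u. u \<in> A \<Longrightarrow> slice u = P \<or> slice u = A_tails - P"
    using slice_two_valued[OF double_mds_card_line_hits[OF double] double_mds_subset[OF double]
        A_tails_words A_tails_iff prime_dc_line_connected[OF double prime]] by blast
  obtain Q where Q: "Q \<subseteq> words (n - m) - A_tails"
    "\<And>u. u \<in> words m - A \<Longrightarrow> slice u = Q \<or> slice u = (words (n - m) - A_tails) - Q"
    using slice_two_valued[OF card_line_hits_complement[OF double] Diff_subset Diff_subset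
        complement_A_tails_iff
        complement_line_connected[OF double prime_dc_line_connected[OF double prime] m_pos]]
    by blast
  define g2 where "g2 v = (if v \<in> A_tails then if v \<in> P then 0 else 1 else if v \<in> Q then 2 else (3::nat))"
    for v :: "nat list"
  have levels: "P = {v \<in> words (n - m). g2 v = 0}" "A_tails - P = {v \<in> words (n - m). g2 v = 1}"
    "Q = {v \<in> words (n - m). g2 v = 2}" "(words (n - m) - A_tails) - Q = {v \<in> words (n - m). g2 v = 3}"
    using P(1) Q(1) A_tails_words unfolding g2_def by auto
  show thesis
  proof (rule that)
    fix u assume "u \<in> words m"
    then consider "slice u = P" | "slice u = A_tails - P" | "slice u = Q"
      | "slice u = (words (n - m) - A_tails) - Q"
      using P(2) Q(2) by blast
    then show "\<exists>c. slice u = {v \<in> words (n - m). g2 v = c}"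
      using levels by cases metis+
  qed (simp add: g2_def)
qed

lemma split_quasigroups:
  "\<exists>g1 g2. quasigroup m g1 \<and> quasigroup (n - m) g2 \<and>
     C = {y \<in> words n. g1 (take m y) = g2 (drop m y)}"
proof -
  obtain g2 :: "nat list \<Rightarrow> nat" where "\<And>v. g2 v < 4"
    and "\<And>u. u \<in> words m \<Longrightarrow> \<exists>c. slice u = {v \<in> words (n - m). g2 v = c}"
    by (rule slices_are_level_sets) (rule that)
  then show ?thesis
    using split_if_slices_are_level_sets by blast
qed

end

section \<open>Permuting coordinates\<close>

definition permute_word :: "(nat \<Rightarrow> nat) \<Rightarrow> nat \<Rightarrow> nat list \<Rightarrow> nat list" where
  "permute_word \<sigma> n x = map (\<lambda>i. x ! \<sigma> i) [0..<n]"

lemma length_permute_word [simp]: "length (permute_word \<sigma> n x) = n"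
  by (simp add: permute_word_def)

lemma nth_permute_word [simp]: "i < n \<Longrightarrow> permute_word \<sigma> n x ! i = x ! \<sigma> i"
  by (simp add: permute_word_def)

lemma permute_word_words:
  assumes "\<And>i. i < n \<Longrightarrow> \<sigma> i < n" and "x \<in> words n"
  shows "permute_word \<sigma> n x \<in> words n"
  using assms nth_words_less by (auto simp: words_def permute_word_def)

lemma permute_word_inverse:
  assumes "\<And>i. i < n \<Longrightarrow> \<sigma> i < n \<and> \<tau> (\<sigma> i) = i" and "length y = n"
  shows "permute_word \<sigma> n (permute_word \<tau> n y) = y"
  by (rule nth_equalityI) (use assms in auto)

lemma permute_word_list_update:
  assumes "\<And>i. i < n \<Longrightarrow> \<sigma> i = j \<longleftrightarrow> i = \<tau> j" and "\<And>i. i < n \<Longrightarrow> \<sigma> i < n" and "length y = n"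
  shows "permute_word \<sigma> n (y[j := a]) = (permute_word \<sigma> n y)[\<tau> j := a]"
proof (rule nth_equalityI)
  fix i assume "i < length (permute_word \<sigma> n (y[j := a]))"
  then have i: "i < n"
    by simp
  then show "permute_word \<sigma> n (y[j := a]) ! i = (permute_word \<sigma> n y)[\<tau> j := a] ! i"
    using assms(1)[OF i] assms(2)[OF i] assms(3) by (auto simp: nth_list_update)
qed simp

lemma bij_betw_lessThan_inverse:
  assumes "bij_betw \<sigma> {..<n} {..<n}"
  obtains \<tau> where "bij_betw \<tau> {..<n} {..<n}"
    "\<And>i. i < n \<Longrightarrow> \<sigma> i < n" "\<And>i. i < n \<Longrightarrow> \<tau> i < n"
    "\<And>i. i < n \<Longrightarrow> \<tau> (\<sigma> i) = i" "\<And>i. i < n \<Longrightarrow> \<sigma> (\<tau> i) = i"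
proof
  show "bij_betw (inv_into {..<n} \<sigma>) {..<n} {..<n}"
    using assms by (rule bij_betw_inv_into)
  then show "\<And>i. i < n \<Longrightarrow> inv_into {..<n} \<sigma> i < n"
    using bij_betwE by blast
  show "\<And>i. i < n \<Longrightarrow> \<sigma> i < n"
    using assms bij_betwE by blast
  show "\<And>i. i < n \<Longrightarrow> inv_into {..<n} \<sigma> (\<sigma> i) = i"
    using assms bij_betw_inv_into_left by fastforce
  show "\<And>i. i < n \<Longrightarrow> \<sigma> (inv_into {..<n} \<sigma> i) = i"
    using assms bij_betw_inv_into_right by fastforce
qed

lemma mds_code_permute:
  assumes C: "mds_code n C" and \<sigma>: "bij_betw \<sigma> {..<n} {..<n}"
  shows "mds_code n {y \<in> words n. permute_word \<sigma> n y \<in> C}"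
proof (rule mds_codeI)
  obtain \<tau> where \<sigma>_less: "\<And>i. i < n \<Longrightarrow> \<sigma> i < n" and \<tau>_less: "\<And>i. i < n \<Longrightarrow> \<tau> i < n"
    and inverse: "\<And>i. i < n \<Longrightarrow> \<tau> (\<sigma> i) = i" "\<And>i. i < n \<Longrightarrow> \<sigma> (\<tau> i) = i"
    using bij_betw_lessThan_inverse[OF \<sigma>] by metis
  fix y j assume y: "y \<in> words n" and j: "j < n"
  have inverse_eq: "\<sigma> i = j \<longleftrightarrow> i = \<tau> j" if "i < n" for i
    using inverse(1)[OF that] inverse(2)[OF j] by auto
  have "permute_word \<sigma> n (y[j := a]) = (permute_word \<sigma> n y)[\<tau> j := a]" for a
    using permute_word_list_update[where \<tau> = \<tau>, OF inverse_eq \<sigma>_less length_words[OF y]] .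
  then have "line_hits {y \<in> words n. permute_word \<sigma> n y \<in> C} y j = line_hits C (permute_word \<sigma> n y) (\<tau> j)"
    using list_update_words[OF y] by (auto simp: line_hits_def)
  then show "card (line_hits {y \<in> words n. permute_word \<sigma> n y \<in> C} y j) = 1"
    using mds_code_card_line_hits[OF C permute_word_words[OF \<sigma>_less y] \<tau>_less[OF j]] by simp
qed simp

lemma decomposableI:
  assumes "2 \<le> m" "m \<le> n - 2" "quasigroup m g1" "quasigroup (n - m) g2" "bij_betw \<sigma> {..<n} {..<n}"
    and "C = {x \<in> words n. g1 (take m (permute_word \<sigma> n x)) = g2 (drop m (permute_word \<sigma> n x))}"
  shows "decomposable n C"
proof -
  have "take m (permute_word \<sigma> n x) = map (\<lambda>i. x ! \<sigma> i) [0..<m]"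
    and "drop m (permute_word \<sigma> n x) = map (\<lambda>i. x ! \<sigma> i) [m..<n]" for x
    using assms(2) by (simp_all add: permute_word_def take_map drop_map)
  then have "C = {x \<in> words n. g1 (map (\<lambda>i. x ! \<sigma> i) [0..<m]) = g2 (map (\<lambda>i. x ! \<sigma> i) [m..<n])}"
    using assms(6) by simp
  then show ?thesis
    unfolding decomposable_def using assms(1-5) by blast
qed

lemma block_first_permutation:
  assumes K: "K \<subseteq> {..<n}"
  obtains \<sigma> where "bij_betw \<sigma> {..<n} {..<n}" "\<And>i. i < n \<Longrightarrow> \<sigma> i \<in> K \<longleftrightarrow> i < card K"
    "\<And>x. take (card K) (permute_word \<sigma> n x) = restrict_word x K"
proof
  define ks where "ks = sorted_list_of_set K"
  define ls where "ls = sorted_list_of_set ({..<n} - K)"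
  have fin: "finite K"
    using K finite_subset by blast
  have set_ks: "set ks = K" and set_ls: "set ls = {..<n} - K" and length_ks: "length ks = card K"
    unfolding ks_def ls_def using fin by simp_all
  have distinct: "distinct (ks @ ls)"
    using set_ks set_ls by (simp add: ks_def ls_def)
  have set_ks_ls: "set (ks @ ls) = {..<n}"
    using set_ks set_ls K by auto
  then have length_ks_ls: "length (ks @ ls) = n"
    using distinct_card[OF distinct] by simp
  show "bij_betw (\<lambda>i. (ks @ ls) ! i) {..<n} {..<n}"
    using bij_betw_nth[OF distinct _ set_ks_ls[symmetric]] length_ks_ls by simp
  show "(ks @ ls) ! i \<in> K \<longleftrightarrow> i < card K" if "i < n" for i
  proof (cases "i < card K")
    case False
    then have "(ks @ ls) ! i \<in> set ls"
      using that length_ks length_ks_ls by (simp add: nth_append)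
    then show ?thesis
      using False set_ls by simp
  qed (use length_ks set_ks in \<open>auto simp: nth_append\<close>)
  show "take (card K) (permute_word (\<lambda>i. (ks @ ls) ! i) n x) = restrict_word x K" for x
  proof -
    have "take (card K) (permute_word (\<lambda>i. (ks @ ls) ! i) n x) = map (\<lambda>i. x ! (ks ! i)) [0..<card K]"
      using length_ks length_ks_ls by (auto simp: permute_word_def take_map nth_append)
    also have "\<dots> = map ((!) x) ks"
      by (rule nth_equalityI) (simp_all add: length_ks)
    finally show ?thesis
      unfolding restrict_word_def ks_def .
  qed
qed

lemma permute_word_agree_outside_block:
  assumes block: "\<And>i. i < n \<Longrightarrow> \<sigma> i \<in> K \<longleftrightarrow> i < m"
    and \<tau>: "\<And>i. i < n \<Longrightarrow> \<tau> i < n \<and> \<sigma> (\<tau> i) = i"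
    and y: "length y = n" "length y' = n" "drop m y = drop m y'"
    and i: "i < n" "i \<notin> K"
  shows "permute_word \<tau> n y ! i = permute_word \<tau> n y' ! i"
proof -
  have "m \<le> \<tau> i"
    using block[of "\<tau> i"] \<tau>[OF i(1)] i(2) by auto
  then have "y ! \<tau> i = y' ! \<tau> i"
    using arg_cong[OF y(3), of "\<lambda>z. z ! (\<tau> i - m)"] y(1,2) \<tau>[OF i(1)] by simp
  then show ?thesis
    using i(1) by simp
qed

lemma compatible_after_permutation:
  assumes block: "\<And>i. i < n \<Longrightarrow> \<sigma> i \<in> K \<longleftrightarrow> i < card K"
    and take_\<sigma>: "\<And>x. take (card K) (permute_word \<sigma> n x) = restrict_word x K"
    and \<sigma>: "\<And>i. i < n \<Longrightarrow> \<sigma> i < n \<and> \<tau> (\<sigma> i) = i" and \<tau>: "\<And>i. i < n \<Longrightarrow> \<tau> i < n \<and> \<sigma> (\<tau> i) = i"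
    and compatible: "\<And>x x'. x \<in> C \<Longrightarrow> x' \<in> C \<Longrightarrow> (\<forall>i<n. i \<notin> K \<longrightarrow> x ! i = x' ! i) \<Longrightarrow>
                       restrict_word x K \<in> A \<longleftrightarrow> restrict_word x' K \<in> A"
    and y: "length y = n" "length y' = n" "permute_word \<tau> n y \<in> C" "permute_word \<tau> n y' \<in> C"
    and drop: "drop (card K) y = drop (card K) y'"
  shows "take (card K) y \<in> A \<longleftrightarrow> take (card K) y' \<in> A"
proof -
  have "take (card K) z = restrict_word (permute_word \<tau> n z) K" if "length z = n" for z
    using take_\<sigma>[of "permute_word \<tau> n z"] permute_word_inverse[OF \<sigma> that] by simp
  moreover have "\<forall>i<n. i \<notin> K \<longrightarrow> permute_word \<tau> n y ! i = permute_word \<tau> n y' ! i"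
    using permute_word_agree_outside_block[OF block \<tau> y(1,2) drop] by blast
  ultimately show ?thesis
    using compatible[OF y(3,4)] y(1,2) by simp
qed

lemma block_decomposable:
  assumes C: "mds_code n C" and A: "double_mds (card K) A" "prime_dc (card K) A"
    and K: "K \<subseteq> {..<n}" "2 \<le> card K" "card K + 2 \<le> n"
    and compatible: "\<And>x x'. x \<in> C \<Longrightarrow> x' \<in> C \<Longrightarrow> (\<forall>i<n. i \<notin> K \<longrightarrow> x ! i = x' ! i) \<Longrightarrow>
                       restrict_word x K \<in> A \<longleftrightarrow> restrict_word x' K \<in> A"
  shows "decomposable n C"
proof -
  obtain \<sigma> where \<sigma>: "bij_betw \<sigma> {..<n} {..<n}" and block: "\<And>i. i < n \<Longrightarrow> \<sigma> i \<in> K \<longleftrightarrow> i < card K"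
    and take_\<sigma>: "\<And>x. take (card K) (permute_word \<sigma> n x) = restrict_word x K"
    by (rule block_first_permutation[OF K(1)]) (rule that)
  obtain \<tau> where \<tau>: "bij_betw \<tau> {..<n} {..<n}" and less: "\<And>i. i < n \<Longrightarrow> \<sigma> i < n" "\<And>i. i < n \<Longrightarrow> \<tau> i < n"
    and inverse: "\<And>i. i < n \<Longrightarrow> \<tau> (\<sigma> i) = i" "\<And>i. i < n \<Longrightarrow> \<sigma> (\<tau> i) = i"
    by (rule bij_betw_lessThan_inverse[OF \<sigma>]) (rule that)
  define C' where "C' = {y \<in> words n. permute_word \<tau> n y \<in> C}"
  have C_eq: "C = {x \<in> words n. permute_word \<sigma> n x \<in> C'}"
    using mds_code_subset[OF C] permute_word_inverse[of n \<tau> \<sigma>] permute_word_words[OF less(1)]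
      less(2) inverse(2) length_words unfolding C'_def by auto
  interpret mds_block_split n "card K" C' A
  proof unfold_locales
    show "mds_code n C'"
      unfolding C'_def by (rule mds_code_permute[OF C \<tau>])
    show "0 < card K" "card K < n"
      using K by simp_all
  next
    fix y y' assume "y \<in> C'" "y' \<in> C'" and drop: "drop (card K) y = drop (card K) y'"
    then have "length y = n" "length y' = n" "permute_word \<tau> n y \<in> C" "permute_word \<tau> n y' \<in> C"
      unfolding C'_def using length_words by auto
    moreover have "\<sigma> i < n \<and> \<tau> (\<sigma> i) = i" "\<tau> i < n \<and> \<sigma> (\<tau> i) = i" if "i < n" for i
      using less inverse that by simp_all
    ultimately show "take (card K) y \<in> A \<longleftrightarrow> take (card K) y' \<in> A"
      using compatible_after_permutation[OF block take_\<sigma> _ _ compatible _ _ _ _ drop] by blast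
  qed (fact A)+
  obtain g1 g2 where g: "quasigroup (card K) g1" "quasigroup (n - card K) g2"
    and C'_eq: "C' = {y \<in> words n. g1 (take (card K) y) = g2 (drop (card K) y)}"
    using split_quasigroups by blast
  have "C = {x \<in> words n. g1 (take (card K) (permute_word \<sigma> n x)) = g2 (drop (card K) (permute_word \<sigma> n x))}"
    using C_eq C'_eq permute_word_words[OF less(1)] by auto
  then show ?thesis
    using decomposableI[OF K(2) _ g \<sigma>] K(3) by simp
qed

section \<open>Canonical representations\<close>

lemma card_remove_if:
  assumes "finite G"
  shows "card G = card (G - {a}) + (if a \<in> G then 1 else 0)"
proof (cases "a \<in> G")
  case True
  then show ?thesis
    using card.remove[OF assms True] by simp
qed simp

lemma parity_determines_membership:
  assumes "finite F" "finite F'" "F - {a} = F' - {a}" "odd (card F) \<longleftrightarrow> odd (card F')"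
  shows "a \<in> F \<longleftrightarrow> a \<in> F'"
proof -
  define c where "c = card (F - {a})"
  have "card F = c + (if a \<in> F then 1 else 0)"
    unfolding c_def by (rule card_remove_if[OF assms(1)])
  moreover have "card F' = c + (if a \<in> F' then 1 else 0)"
    unfolding c_def assms(3) by (rule card_remove_if[OF assms(2)])
  ultimately show ?thesis
    using assms(4) by (cases "a \<in> F"; cases "a \<in> F'") simp_all
qed

lemma odd_card_toggle_zero:
  fixes n :: nat
  assumes "0 < n"
  shows "odd (card {i. i < n \<and> (P i \<noteq> (i = 0 \<and> s))}) \<longleftrightarrow> (odd (card {i. i < n \<and> P i}) \<noteq> s)"
proof -
  define G where "G = {i. i < n \<and> P i}"
  define H where "H = {i. i < n \<and> (P i \<noteq> (i = 0 \<and> s))}"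
  define c where "c = card (G - {0})"
  have finite_G: "finite G" and finite_H: "finite H"
    unfolding G_def H_def by simp_all
  have card_G: "card G = c + (if 0 \<in> G then 1 else 0)"
    unfolding c_def by (rule card_remove_if[OF finite_G])
  have HG: "H - {0} = G - {0}"
    unfolding G_def H_def by auto
  have card_H: "card H = c + (if 0 \<in> H then 1 else 0)"
    unfolding c_def HG[symmetric] by (rule card_remove_if[OF finite_H])
  have zero_H: "0 \<in> H \<longleftrightarrow> (0 \<in> G) \<noteq> s"
    using assms unfolding G_def H_def by auto
  show ?thesis
    unfolding G_def[symmetric] H_def[symmetric] using card_G card_H zero_H by (cases "0 \<in> G"; cases s) simp_all
qed

lemma canonical_rep_block:
  assumes R: "canonical_rep n S k Ks Ss s0" and j: "j < k"
  shows "Ks ! j \<subseteq> {..<n}" "finite (Ks ! j)" "0 < card (Ks ! j)"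
    "double_mds (card (Ks ! j)) (Ss ! j)" "prime_dc (card (Ks ! j)) (Ss ! j)"
proof -
  show "Ks ! j \<subseteq> {..<n}"
    using R j unfolding canonical_rep_def by blast
  then show fin: "finite (Ks ! j)"
    using finite_subset by blast
  have "Ks ! j \<noteq> {}"
    using R j unfolding canonical_rep_def by blast
  then show "0 < card (Ks ! j)"
    using fin by (simp add: card_gt_0_iff)
  show "double_mds (card (Ks ! j)) (Ss ! j)" "prime_dc (card (Ks ! j)) (Ss ! j)"
    using R j unfolding canonical_rep_def by blast+
qed

lemma canonical_rep_mem_iff:
  assumes "canonical_rep n S k Ks Ss s0" and "x \<in> words n"
  shows "x \<in> S \<longleftrightarrow> odd (card {j. j < k \<and> restrict_word x (Ks ! j) \<in> Ss ! j}) \<noteq> s0"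
proof -
  have "\<forall>x\<in>words n. x \<in> S \<longleftrightarrow> odd (card {j. j < k \<and> restrict_word x (Ks ! j) \<in> Ss ! j}) \<noteq> s0"
    using assms(1) unfolding canonical_rep_def by (elim conjE) assumption
  then show ?thesis
    using assms(2) by blast
qed

lemma canonical_rep_blocks_disjoint:
  "canonical_rep n S k Ks Ss s0 \<Longrightarrow> j < k \<Longrightarrow> j' < k \<Longrightarrow> j \<noteq> j' \<Longrightarrow> Ks ! j \<inter> Ks ! j' = {}"
  unfolding canonical_rep_def by blast

lemma canonical_rep_sum_card_blocks:
  assumes R: "canonical_rep n S k Ks Ss s0"
  shows "(\<Sum>j<k. card (Ks ! j)) = n"
proof -
  have "card (\<Union>j<k. Ks ! j) = (\<Sum>j<k. card (Ks ! j))"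
    using canonical_rep_block(2)[OF R] canonical_rep_blocks_disjoint[OF R] by (intro card_UN_disjoint) auto
  moreover have "(\<Union>j<k. Ks ! j) = {..<n}"
    using R unfolding canonical_rep_def by blast
  ultimately show ?thesis
    by simp
qed

lemma canonical_rep_card_block_le:
  assumes R: "canonical_rep n S k Ks Ss s0" and j0: "j0 < k"
  shows "card (Ks ! j0) + (k - 1) \<le> n"
proof -
  have "k - 1 = (\<Sum>j\<in>{..<k} - {j0}. 1)"
    using j0 by simp
  also have "\<dots> \<le> (\<Sum>j\<in>{..<k} - {j0}. card (Ks ! j))"
    using canonical_rep_block(3)[OF R] by (intro sum_mono) (simp add: Suc_le_eq)
  finally show ?thesis
    using canonical_rep_sum_card_blocks[OF R] sum.remove[of "{..<k}" j0 "\<lambda>j. card (Ks ! j)"] j0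
    by simp
qed

lemma canonical_rep_middle_block:
  assumes R: "canonical_rep n S k Ks Ss s0"
    and k: "(2 < k \<and> k < n) \<or> (k = 2 \<and> 1 < card (Ks ! 0) \<and> 1 < card (Ks ! 1))"
  obtains j0 where "j0 < k" "2 \<le> card (Ks ! j0)" "card (Ks ! j0) + 2 \<le> n"
proof (cases "k = 2")
  case True
  then have "card (Ks ! 0) + card (Ks ! 1) = n"
    using canonical_rep_sum_card_blocks[OF R] by (simp add: numeral_2_eq_2)
  then show thesis
    using that[of 0] k True by simp
next
  case False
  then have k: "2 < k" "k < n"
    using k by auto
  have "\<exists>j0<k. 2 \<le> card (Ks ! j0)"
  proof (rule ccontr)
    assume "\<not> (\<exists>j0<k. 2 \<le> card (Ks ! j0))"
    then have "card (Ks ! j) = 1" if "j < k" for j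
      using canonical_rep_block(3)[OF R that] that by fastforce
    then have "(\<Sum>j<k. card (Ks ! j)) = k"
      by simp
    then show False
      using canonical_rep_sum_card_blocks[OF R] k by simp
  qed
  then show thesis
    using that canonical_rep_card_block_le[OF R] k by fastforce
qed

lemma canonical_rep_block_membership_eq:
  assumes R: "canonical_rep n S k Ks Ss s0" and j0: "j0 < k"
    and x: "x \<in> words n" "x \<in> S" and x': "x' \<in> words n" "x' \<in> S"
    and agree: "\<forall>i<n. i \<notin> Ks ! j0 \<longrightarrow> x ! i = x' ! i"
  shows "restrict_word x (Ks ! j0) \<in> Ss ! j0 \<longleftrightarrow> restrict_word x' (Ks ! j0) \<in> Ss ! j0"
proof -
  define F where "F z = {j. j < k \<and> restrict_word z (Ks ! j) \<in> Ss ! j}" for z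
  have "restrict_word x (Ks ! j) = restrict_word x' (Ks ! j)" if "j < k" "j \<noteq> j0" for j
    using agree canonical_rep_block(1,2)[OF R that(1)] canonical_rep_blocks_disjoint[OF R that(1) j0 that(2)]
    unfolding restrict_word_def by (intro map_cong) auto
  then have "F x - {j0} = F x' - {j0}"
    unfolding F_def by auto
  moreover have "odd (card (F x)) \<longleftrightarrow> odd (card (F x'))"
    using canonical_rep_mem_iff[OF R x(1)] canonical_rep_mem_iff[OF R x'(1)] x(2) x'(2)
    unfolding F_def by blast
  ultimately have "j0 \<in> F x \<longleftrightarrow> j0 \<in> F x'"
    by (intro parity_determines_membership) (simp_all add: F_def)
  then show ?thesis
    using j0 unfolding F_def by simp
qed

lemma canonical_rep_block_decomposable:
  assumes R: "canonical_rep n S k Ks Ss s0" and C: "mds_code n C" "C \<subseteq> S"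
    and j0: "j0 < k" "2 \<le> card (Ks ! j0)" "card (Ks ! j0) + 2 \<le> n"
  shows "decomposable n C"
proof (rule block_decomposable[OF C(1) canonical_rep_block(4,5,1)[OF R j0(1)] j0(2,3)])
  fix x x' assume "x \<in> C" "x' \<in> C" "\<forall>i<n. i \<notin> Ks ! j0 \<longrightarrow> x ! i = x' ! i"
  then show "restrict_word x (Ks ! j0) \<in> Ss ! j0 \<longleftrightarrow> restrict_word x' (Ks ! j0) \<in> Ss ! j0"
    using canonical_rep_block_membership_eq[OF R j0(1)] C mds_code_subset by blast
qed

lemma restrict_word_singleton [simp]: "restrict_word x {i} = [x ! i]"
  by (simp add: restrict_word_def)

lemma canonical_rep_singleton_blocks:
  assumes R: "canonical_rep n S n Ks Ss s0"
  obtains e where "\<And>j. j < n \<Longrightarrow> Ks ! j = {e j}" "\<And>j. j < n \<Longrightarrow> e j < n" "inj_on e {..<n}"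
proof
  define e where "e j = the_elem (Ks ! j)" for j
  show e: "Ks ! j = {e j}" if "j < n" for j
  proof -
    have "card (Ks ! j) = 1"
      using canonical_rep_card_block_le[OF R that] canonical_rep_block(3)[OF R that] that by linarith
    then obtain i where "Ks ! j = {i}"
      using card_1_singleton_iff by (metis One_nat_def)
    then show ?thesis
      unfolding e_def by simp
  qed
  show "e j < n" if "j < n" for j
    using canonical_rep_block(1)[OF R that] e[OF that] by simp
  show "inj_on e {..<n}"
  proof (rule inj_onI)
    fix j j' assume j: "j \<in> {..<n}" "j' \<in> {..<n}" and "e j = e j'"
    then have "Ks ! j \<inter> Ks ! j' \<noteq> {}"
      using e by simp
    then show "j = j'"
      using canonical_rep_blocks_disjoint[OF R] j by blast
  qed
qed

text \<open>The constant \<open>s0\<close> of the representation is absorbed into the coordinate function of coordinate 0.\<close>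

lemma canonical_rep_singleton_blocks_linear:
  assumes R: "canonical_rep n S n Ks Ss s0" and S: "double_mds n S"
  shows "linear_double_mds n S"
proof -
  have n: "0 < n"
    using R unfolding canonical_rep_def by (elim conjE) linarith
  obtain e where e: "\<And>j. j < n \<Longrightarrow> Ks ! j = {e j}" and e_less: "\<And>j. j < n \<Longrightarrow> e j < n"
    and e_inj: "inj_on e {..<n}"
    by (rule canonical_rep_singleton_blocks[OF R]) (rule that)
  define \<chi> where "\<chi> i a \<longleftrightarrow> (\<exists>j<n. e j = i \<and> [a] \<in> Ss ! j) \<noteq> (i = 0 \<and> s0)" for i a
  have "y \<in> S \<longleftrightarrow> odd (card {i. i < n \<and> \<chi> i (y ! i)})" if y: "y \<in> words n" for y
  proof -
    define J where "J = {j. j < n \<and> restrict_word y (Ks ! j) \<in> Ss ! j}"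
    have "e ` J = {i. i < n \<and> (\<exists>j<n. e j = i \<and> [y ! i] \<in> Ss ! j)}"
      unfolding J_def using e e_less by auto
    moreover have "card (e ` J) = card J"
      by (rule card_image, rule inj_on_subset[OF e_inj]) (auto simp: J_def)
    ultimately have "card J = card {i. i < n \<and> (\<exists>j<n. e j = i \<and> [y ! i] \<in> Ss ! j)}"
      by simp
    then show ?thesis
      using canonical_rep_mem_iff[OF R y] odd_card_toggle_zero[OF n] unfolding \<chi>_def J_def by simp
  qed
  then show ?thesis
    unfolding linear_double_mds_def using S by blast
qed

theorem corollary5:
  fixes n k :: nat and Ks :: "nat set list" and S C :: "nat list set"
  assumes "double_mds n S"
    and "canonical_params n S k Ks"
    and "mds_code n C"
    and "C \<subseteq> S"
  shows "(((2 < k \<and> k < n) \<or> (k = 2 \<and> card (Ks ! 0) > 1 \<and> card (Ks ! 1) > 1))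
           \<longrightarrow> decomposable n C)
         \<and> (k = n \<longrightarrow> semilinear n C)"
proof -
  obtain Ss s0 where R: "canonical_rep n S k Ks Ss s0"
    using assms(2) unfolding canonical_params_def by blast
  have "decomposable n C" if "(2 < k \<and> k < n) \<or> (k = 2 \<and> card (Ks ! 0) > 1 \<and> card (Ks ! 1) > 1)"
    using canonical_rep_middle_block[OF R that] canonical_rep_block_decomposable[OF R assms(3,4)] by metis
  moreover have "semilinear n C" if "k = n"
    using canonical_rep_singleton_blocks_linear[OF R[unfolded that] assms(1)] assms(3,4)
    unfolding semilinear_def by blast
  ultimately show ?thesis
    by blast
qed

end
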